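(* Let $0<\varepsilon<1/4$ and $r=(10/\varepsilon^2)\log(1/\varepsilon)$. Let $G$ be a bipartite graph with at least one edge, and let $H$ be a balanced bipartite subgraph of $G$ with parts $A,B$, $|A|=|B|=m$, that maximizes $\Phi(F)=d_F^{\,r}\,v(F)$ over all balanced bipartite subgraphs $F$ of $G$. Assume $\varepsilon m$ is a positive integer. Let $A_1\subseteq A$, $B_1\subseteq B$ with $|A_1|=|B_1|=\varepsilon m$, and put $A_2=A\setminus A_1$, $B_2=B\setminus B_1$. Then $$d(A_2,B_2)< d_H\,(1+\varepsilon^3/3).$$
   Context: $\log$ is the natural logarithm; $v(F)$ is the number of vertices of $F$. A bipartite graph is balanced if its two parts have equal size. For disjoint vertex sets $X,Y$, $d(X,Y)=e(X,Y)/(|X|\,|Y|)$ (number of edges between $X$ and $Y$ divided by $|X||Y|$); the density $d_F$ of a bipartite graph $F$ is this quantity for its two parts. *)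

theory Defs
  imports Complex_Main
begin

definition graph :: "'a set \<Rightarrow> ('a \<Rightarrow> 'a \<Rightarrow> bool) \<Rightarrow> bool" where
  "graph V E \<longleftrightarrow> finite V \<and> (\<forall>u v. E u v \<longrightarrow> E v u) \<and> (\<forall>u. \<not> E u u)
     \<and> (\<forall>u v. E u v \<longrightarrow> u \<in> V \<and> v \<in> V)"

definition bipartite_graph :: "'a set \<Rightarrow> ('a \<Rightarrow> 'a \<Rightarrow> bool) \<Rightarrow> bool" where
  "bipartite_graph V E \<longleftrightarrow> graph V E \<and>
     (\<exists>X Y. X \<inter> Y = {} \<and> X \<union> Y = V \<and>
        (\<forall>u v. E u v \<longrightarrow> (u \<in> X \<and> v \<in> Y) \<or> (u \<in> Y \<and> v \<in> X)))"

definition eXY :: "('a \<Rightarrow> 'a \<Rightarrow> bool) \<Rightarrow> 'a set \<Rightarrow> 'a set \<Rightarrow> nat" where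
  "eXY E X Y = card {(x, y). x \<in> X \<and> y \<in> Y \<and> E x y}"

definition dens :: "('a \<Rightarrow> 'a \<Rightarrow> bool) \<Rightarrow> 'a set \<Rightarrow> 'a set \<Rightarrow> real" where
  "dens E X Y = real (eXY E X Y) / (real (card X) * real (card Y))"

definition balanced_bip_subgraph ::
  "'a set \<Rightarrow> ('a \<Rightarrow> 'a \<Rightarrow> bool) \<Rightarrow> 'a set \<Rightarrow> 'a set \<Rightarrow> ('a \<Rightarrow> 'a \<Rightarrow> bool) \<Rightarrow> bool" where
  "balanced_bip_subgraph V E A B F \<longleftrightarrow>
     A \<subseteq> V \<and> B \<subseteq> V \<and> A \<inter> B = {} \<and> card A = card B \<and>
     (\<forall>u v. F u v \<longrightarrow> F v u) \<and> (\<forall>u v. F u v \<longrightarrow> E u v) \<and>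
     (\<forall>u v. F u v \<longrightarrow> (u \<in> A \<and> v \<in> B) \<or> (u \<in> B \<and> v \<in> A))"

definition Phi :: "real \<Rightarrow> 'a set \<Rightarrow> 'a set \<Rightarrow> ('a \<Rightarrow> 'a \<Rightarrow> bool) \<Rightarrow> real" where
  "Phi r A B F = dens F A B powr r * real (card A + card B)"

end

theory Submission
  imports Defs
begin

text \<open>Deleting \<open>\<epsilon>m\<close> vertices from each side of \<open>H\<close> scales \<open>v\<close> by \<open>1 - \<epsilon>\<close>. If the
  remaining pair had density at least \<open>d\<^sub>H (1 + \<epsilon>\<^sup>3/3)\<close>, then \<open>\<Phi>\<close> would grow by the factor
  \<open>(1 - \<epsilon>) (1 + \<epsilon>\<^sup>3/3)\<^sup>r > 1\<close>, contradicting the maximality of \<open>H\<close>; here \<open>d\<^sub>H > 0\<close>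
  because a single edge already has \<open>\<Phi> = 2\<close>.\<close>

lemma ln_one_plus_cube_bound:
  fixes e :: real
  assumes "0 < e" "e < 1/4"
  shows "(10 / e\<^sup>2) * ln (1 / e) * ln (1 + e^3/3) > e + 2 * e\<^sup>2"
proof -
  define x where "x = e^3/3"
  have "e^3 \<le> (1/4)^3" using assms by (intro power_mono) auto
  then have e3: "e^3 \<le> 1/64" by (simp add: power_divide)
  have x: "0 \<le> x" "x \<le> 1" using assms e3 unfolding x_def by auto
  have ln_x: "x - x\<^sup>2 \<le> ln (1 + x)" using ln_one_plus_pos_lower_bound[OF x] by simp
  have "1 - e \<le> ln (1 / e)" using ln_le_minus_one[of e] assms by (simp add: ln_div)
  then have ln_e: "3/4 \<le> ln (1 / e)" using assms by simp
  have x_x2: "0 \<le> x - x\<^sup>2" using x mult_left_le[of x x] by (simp add: power2_eq_square)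
  have "e + 2 * e\<^sup>2 < e * (5/2) * (1 - e^3/3)"
  proof -
    have "0 < (5/2) * (1 - e^3/3) - 1 - 2 * e" using assms(2) e3 by (simp add: field_simps)
    then have "0 < e * ((5/2) * (1 - e^3/3) - 1 - 2 * e)" using assms(1) by simp
    then show ?thesis by (simp add: power2_eq_square algebra_simps)
  qed
  also have "\<dots> = (10 / e\<^sup>2) * (3/4) * (x - x\<^sup>2)"
    using assms(1) unfolding x_def by (simp add: field_simps power2_eq_square power3_eq_cube)
  also have "\<dots> \<le> (10 / e\<^sup>2) * ln (1 / e) * (x - x\<^sup>2)"
    using ln_e x_x2 by (intro mult_right_mono mult_left_mono) auto
  also have "\<dots> \<le> (10 / e\<^sup>2) * ln (1 / e) * ln (1 + x)"
    using ln_x ln_e by (intro mult_left_mono) auto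
  finally show ?thesis unfolding x_def .
qed

lemma one_minus_mult_powr_gt_one:
  fixes e :: real
  assumes "0 < e" "e < 1/4"
  shows "1 < (1 - e) * (1 + e^3/3) powr ((10 / e\<^sup>2) * ln (1 / e))"
proof -
  have "- e - 2 * e\<^sup>2 \<le> ln (1 - e)" using ln_one_minus_pos_lower_bound[of e] assms by simp
  then have pos: "0 < (10 / e\<^sup>2) * ln (1 / e) * ln (1 + e^3/3) + ln (1 - e)"
    using ln_one_plus_cube_bound[OF assms] by linarith
  have "0 < 1 + e^3/3" using assms by (intro add_pos_nonneg) auto
  then have "(1 - e) * (1 + e^3/3) powr ((10 / e\<^sup>2) * ln (1 / e))
      = exp ((10 / e\<^sup>2) * ln (1 / e) * ln (1 + e^3/3) + ln (1 - e))"
    using assms by (simp add: powr_def exp_add mult.commute)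
  with pos show ?thesis by simp
qed

lemma less_mult_if_powr_weighted_le:
  fixes d d' c r n n' :: real
  assumes "0 < d" "0 < c" "0 \<le> r" "0 < n'"
    and le: "d' powr r * n' \<le> d powr r * n"
    and gain: "n < c powr r * n'"
  shows "d' < d * c"
proof (rule ccontr)
  assume "\<not> d' < d * c"
  then have "(d * c) powr r \<le> d' powr r"
    using assms by (intro powr_mono2) auto
  then have "d powr r * c powr r \<le> d' powr r"
    using assms by (simp add: powr_mult)
  then have "d powr r * c powr r * n' \<le> d' powr r * n'"
    using \<open>0 < n'\<close> by (intro mult_right_mono) auto
  with le have "d powr r * (c powr r * n') \<le> d powr r * n" by (simp add: mult.assoc)
  with gain \<open>0 < d\<close> show False by simp
qed

definition induced :: "('a \<Rightarrow> 'a \<Rightarrow> bool) \<Rightarrow> 'a set \<Rightarrow> 'a set \<Rightarrow> 'a \<Rightarrow> 'a \<Rightarrow> bool" where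
  "induced H X Y = (\<lambda>x y. H x y \<and> ((x \<in> X \<and> y \<in> Y) \<or> (x \<in> Y \<and> y \<in> X)))"

lemma dens_induced [simp]: "dens (induced H X Y) X Y = dens H X Y"
  unfolding dens_def eXY_def induced_def by (metis (no_types, lifting))

lemma balanced_bip_subgraph_induced:
  assumes "balanced_bip_subgraph V E A B H" "X \<subseteq> A" "Y \<subseteq> B" "card X = card Y"
  shows "balanced_bip_subgraph V E X Y (induced H X Y)"
  using assms unfolding balanced_bip_subgraph_def induced_def by auto

lemma dens_pos_if_Phi_maximal:
  assumes "graph V E" "E u v"
    and max: "\<And>A' B' F. balanced_bip_subgraph V E A' B' F \<Longrightarrow> Phi r A' B' F \<le> Phi r A B H"
  shows "0 < dens H A B"
proof -
  have uv: "u \<in> V" "v \<in> V" "u \<noteq> v" "E v u" using assms(1,2) unfolding graph_def by metis+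
  define F where "F = (\<lambda>x y. (x = u \<and> y = v) \<or> (x = v \<and> y = u))"
  have "balanced_bip_subgraph V E {u} {v} F"
    unfolding balanced_bip_subgraph_def F_def using uv \<open>E u v\<close> by auto
  moreover have "{(x, y). x \<in> {u} \<and> y \<in> {v} \<and> F x y} = {(u, v)}" unfolding F_def by auto
  then have "Phi r {u} {v} F = 2" unfolding Phi_def dens_def eXY_def by simp
  ultimately have "0 < Phi r A B H" using max by fastforce
  moreover have "0 \<le> dens H A B" unfolding dens_def by simp
  ultimately show ?thesis unfolding Phi_def by (cases "dens H A B = 0") auto
qed

theorem lemma3p4:
  fixes V :: "'a set" and E H :: "'a \<Rightarrow> 'a \<Rightarrow> bool"
    and A B A1 B1 :: "'a set" and \<epsilon> r :: real and m k :: nat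
  assumes eps: "0 < \<epsilon>" "\<epsilon> < 1/4"
    and r_def: "r = (10 / \<epsilon>\<^sup>2) * ln (1 / \<epsilon>)"
    and G: "bipartite_graph V E" and edge: "\<exists>u v. E u v"
    and H: "balanced_bip_subgraph V E A B H"
    and m: "card A = m" "card B = m"
    and maxH: "\<And>A' B' F. balanced_bip_subgraph V E A' B' F \<Longrightarrow> Phi r A' B' F \<le> Phi r A B H"
    and k: "\<epsilon> * real m = real k" "k > 0"
    and A1: "A1 \<subseteq> A" "card A1 = k"
    and B1: "B1 \<subseteq> B" "card B1 = k"
  shows "dens H (A - A1) (B - B1) < dens H A B * (1 + \<epsilon>^3 / 3)"
proof -
  have "m > 0" using k eps by (cases "m = 0") auto
  then have fin: "finite A" "finite B" using m card.infinite by force+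
  have "real k < real m" using k eps \<open>m > 0\<close> by (simp add: mult_less_cancel_right1 flip: k(1))
  then have "k < m" by simp
  have card_diff: "card (A - A1) = m - k" "card (B - B1) = m - k"
    using A1 B1 fin m by (simp_all add: card_Diff_subset finite_subset)
  have "0 \<le> r" using eps r_def by (simp add: ln_ge_zero)
  have "graph V E" using G unfolding bipartite_graph_def by blast
  obtain u v where "E u v" using edge by blast
  have dens_pos: "0 < dens H A B" by (rule dens_pos_if_Phi_maximal[OF \<open>graph V E\<close> \<open>E u v\<close> maxH])
  have "Phi r (A - A1) (B - B1) (induced H (A - A1) (B - B1)) \<le> Phi r A B H"
    using card_diff by (intro maxH balanced_bip_subgraph_induced[OF H]) auto
  then have "dens H (A - A1) (B - B1) powr r * (2 * (real m - real k))
      \<le> dens H A B powr r * (2 * real m)"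
    using card_diff m \<open>k < m\<close> unfolding Phi_def by (simp add: of_nat_diff)
  then have no_gain: "dens H (A - A1) (B - B1) powr r * (real m - real k) \<le> dens H A B powr r * real m"
    by (simp add: algebra_simps)
  have "real m * 1 < real m * ((1 - \<epsilon>) * (1 + \<epsilon>^3/3) powr r)"
    using one_minus_mult_powr_gt_one[OF eps] \<open>m > 0\<close> r_def by (intro mult_strict_left_mono) auto
  then have "real m < (1 + \<epsilon>^3/3) powr r * (real m - real k)"
    by (simp add: algebra_simps flip: k(1))
  from less_mult_if_powr_weighted_le[OF dens_pos _ \<open>0 \<le> r\<close> _ no_gain this]
  show ?thesis using eps \<open>real k < real m\<close> by (simp add: add_pos_nonneg)
qed

end
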